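(* Let $G$ be a non-discrete, torsion-free locally compact abelian group. Then $G_{op}\neq 0$.
   Context: A subgroup $H$ of an abelian group $G$ is pure if $nH=H\cap nG$ for every positive integer $n$. For an LCA group $G$, $G_{op}$ (the $OP$ subgroup of $G$) denotes the intersection of all open pure subgroups of $G$. *)

theory Defs
  imports "HOL-Analysis.Analysis"
begin

primrec nsmul :: "nat \<Rightarrow> 'a::ab_group_add \<Rightarrow> 'a" where
  "nsmul 0 x = 0"
| "nsmul (Suc n) x = x + nsmul n x"

definition LCA_group :: "'a::{ab_group_add, t2_space} itself \<Rightarrow> bool" where
  "LCA_group _ \<longleftrightarrow>
     continuous_on UNIV (\<lambda>p::'a \<times> 'a. fst p + snd p) \<and>
     continuous_on UNIV (uminus :: 'a \<Rightarrow> 'a) \<and>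
     locally_compact_space (euclidean :: 'a topology)"

definition subgroup_add :: "'a::ab_group_add set \<Rightarrow> bool" where
  "subgroup_add H \<longleftrightarrow> 0 \<in> H \<and> (\<forall>x\<in>H. \<forall>y\<in>H. x + y \<in> H) \<and> (\<forall>x\<in>H. - x \<in> H)"

definition pure_subgroup :: "'a::ab_group_add set \<Rightarrow> bool" where
  "pure_subgroup H \<longleftrightarrow> subgroup_add H \<and>
     (\<forall>n::nat. n > 0 \<longrightarrow> nsmul n ` H = H \<inter> nsmul n ` UNIV)"

definition torsion_free :: "'a::ab_group_add itself \<Rightarrow> bool" where
  "torsion_free _ \<longleftrightarrow> (\<forall>(x::'a) (n::nat). n > 0 \<longrightarrow> nsmul n x = 0 \<longrightarrow> x = 0)"

definition G_op :: "'a::{ab_group_add, topological_space} set" where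
  "G_op = \<Inter> {H. open H \<and> pure_subgroup H}"

end

theory Submission
  imports Defs
begin

text \<open>
  Suppose G_op = 0, so every nonzero element is missed by some open pure subgroup. Let W be
  an open neighbourhood of 0 inside a compact set C. Covering C - W by the complements of
  finitely many of these subgroups yields an open subgroup H with H \<inter> C \<subseteq> W; hence U = H \<inter> C
  is a compact open neighbourhood of 0. By compactness some neighbourhood N of 0 satisfies
  U + N \<subseteq> U, and as G is not discrete N contains some x \<noteq> 0, all of whose multiples lie in U.
  For an open pure subgroup P, the compact set U meets only finitely many cosets of P, so two
  multiples of x lie in the same coset and m x \<in> P for some m > 0. Purity gives m x = m h with
  h \<in> P, and torsion-freeness gives x = h \<in> P. Thus 0 \<noteq> x \<in> G_op.
\<close>

lemma nsmul_add: "nsmul (a + b) x = nsmul a x + nsmul b (x::'a::ab_group_add)"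
  by (induction a) (auto simp: algebra_simps)

lemma nsmul_diff: "nsmul n (a - b) = nsmul n a - nsmul n (b::'a::ab_group_add)"
  by (induction n) (auto simp: algebra_simps)

lemma subgroup_add_diff:
  assumes "subgroup_add H" "x \<in> H" "y \<in> H"
  shows "x - y \<in> H"
  using assms unfolding subgroup_add_def by (metis diff_conv_add_uminus)

lemma subgroup_add_INT:
  assumes "\<And>i. i \<in> I \<Longrightarrow> subgroup_add (H i)"
  shows "subgroup_add (\<Inter>i\<in>I. H i)"
  using assms unfolding subgroup_add_def by blast

lemma open_vimage_translation:
  fixes S :: "'a::{ab_group_add, topological_space} set"
  assumes add: "continuous_on UNIV (\<lambda>p::'a \<times> 'a. fst p + snd p)" and "open S"
  shows "open ((\<lambda>y. y + a) -` S)"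
proof -
  have "continuous_on UNIV ((\<lambda>p::'a \<times> 'a. fst p + snd p) \<circ> (\<lambda>y. (y, a)))"
    by (intro continuous_on_compose continuous_on_Pair continuous_on_id continuous_on_const
        continuous_on_subset[OF add]) auto
  then show ?thesis
    using \<open>open S\<close> open_vimage by (fastforce simp: o_def)
qed

lemma open_subgroup_closed:
  fixes H :: "'a::{ab_group_add, topological_space} set"
  assumes add: "continuous_on UNIV (\<lambda>p::'a \<times> 'a. fst p + snd p)"
    and "open H" "subgroup_add H"
  shows "closed H"
proof -
  have "- H = (\<Union>a\<in>-H. (\<lambda>y. y + - a) -` H)"
    using subgroup_add_diff[OF \<open>subgroup_add H\<close>] \<open>subgroup_add H\<close>
    by (auto simp: subgroup_add_def) (metis add.commute diff_add_cancel diff_conv_add_uminus)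
  moreover have "open (\<Union>a\<in>-H. (\<lambda>y. y + - a) -` H)"
    using open_vimage_translation[OF add \<open>open H\<close>] by blast
  ultimately show ?thesis
    by (simp add: closed_def)
qed

lemma open_zero_imp_discrete:
  fixes S :: "'a::{ab_group_add, topological_space} set"
  assumes add: "continuous_on UNIV (\<lambda>p::'a \<times> 'a. fst p + snd p)" and "open {0::'a}"
  shows "open S"
proof -
  have "S = (\<Union>s\<in>S. (\<lambda>y. y + - s) -` {0})"
    by auto
  then show ?thesis
    using open_vimage_translation[OF add \<open>open {0}\<close>] by (metis open_UN)
qed

lemma compact_open_nhd_if_separated_by_open_subgroups:
  assumes add: "continuous_on UNIV (\<lambda>p::'a \<times> 'a. fst p + snd p)"
    and "locally_compact_space (euclidean :: 'a topology)"
    and sep: "\<And>y::'a. y \<noteq> 0 \<Longrightarrow> \<exists>H. open H \<and> subgroup_add H \<and> y \<notin> H"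
  obtains U :: "'a::{ab_group_add, topological_space} set" where "compact U" "open U" "0 \<in> U"
proof -
  obtain W C :: "'a set" where W: "open W" "compact C" "0 \<in> W" "W \<subseteq> C"
  proof -
    have "\<exists>W C. openin euclidean W \<and> compactin euclidean C \<and> (0::'a) \<in> W \<and> W \<subseteq> C"
      using assms(2) unfolding locally_compact_space_def by simp
    then show thesis
      using that unfolding open_openin[symmetric] compactin_euclidean_iff by blast
  qed
  obtain Hy where Hy: "\<And>y::'a. y \<noteq> 0 \<Longrightarrow> open (Hy y) \<and> subgroup_add (Hy y) \<and> y \<notin> Hy y"
    using sep by metis
  have "compact (C - W)"
    using W by (simp add: Diff_eq compact_Int_closed closed_Compl)
  moreover have "open (- Hy y)" if "y \<in> C - W" for y
    using that W Hy[of y] open_subgroup_closed[OF add] by auto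
  moreover have "C - W \<subseteq> (\<Union>y\<in>C - W. - Hy y)"
  proof
    fix y assume "y \<in> C - W"
    then have "y \<noteq> 0"
      using W(3) by blast
    then show "y \<in> (\<Union>y\<in>C - W. - Hy y)"
      using Hy \<open>y \<in> C - W\<close> by blast
  qed
  ultimately obtain T where T: "T \<subseteq> C - W" "finite T" "C - W \<subseteq> (\<Union>y\<in>T. - Hy y)"
    by (rule compactE_image)
  define H where "H = (\<Inter>y\<in>T. Hy y)"
  have T_nonzero: "y \<noteq> 0" if "y \<in> T" for y
    using that T(1) W(3) by blast
  have "open H"
    unfolding H_def using T(2) T_nonzero Hy by (intro open_INT) auto
  moreover have "subgroup_add H"
    unfolding H_def using T_nonzero Hy by (intro subgroup_add_INT) auto
  ultimately have "closed H"
    by (rule open_subgroup_closed[OF add])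
  have "H \<inter> C = H \<inter> W"
    using T(3) W(4) unfolding H_def by blast
  show thesis
  proof
    show "compact (H \<inter> C)"
      using compact_Int_closed[OF W(2) \<open>closed H\<close>] by (simp add: Int_commute)
    show "open (H \<inter> C)"
      using \<open>H \<inter> C = H \<inter> W\<close> \<open>open H\<close> W(1) by auto
    show "0 \<in> H \<inter> C"
      using \<open>subgroup_add H\<close> W by (auto simp: subgroup_add_def)
  qed
qed

lemma compact_open_absorbs_nhd:
  fixes U :: "'a::{ab_group_add, topological_space} set"
  assumes add: "continuous_on UNIV (\<lambda>p::'a \<times> 'a. fst p + snd p)"
    and "compact U" "open U"
  obtains N where "open N" "0 \<in> N" "\<And>u z. u \<in> U \<Longrightarrow> z \<in> N \<Longrightarrow> u + z \<in> U"
proof -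
  have open_sum: "open ((\<lambda>p::'a \<times> 'a. fst p + snd p) -` U)"
    using open_vimage[OF \<open>open U\<close> add] .
  have "\<exists>A B. open A \<and> open B \<and> u \<in> A \<and> 0 \<in> B \<and> A \<times> B \<subseteq> (\<lambda>p. fst p + snd p) -` U"
    if "u \<in> U" for u
  proof -
    have "(u, 0) \<in> (\<lambda>p::'a \<times> 'a. fst p + snd p) -` U"
      using that by simp
    then obtain A B where "open A" "open B" "(u, 0) \<in> A \<times> B" "A \<times> B \<subseteq> (\<lambda>p. fst p + snd p) -` U"
      by (rule open_prod_elim[OF open_sum])
    then show ?thesis
      by blast
  qed
  then obtain A B where AB: "\<And>u. u \<in> U \<Longrightarrow>
      open (A u) \<and> open (B u) \<and> u \<in> A u \<and> 0 \<in> B u \<and> A u \<times> B u \<subseteq> (\<lambda>p. fst p + snd p) -` U"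
    by metis
  obtain T where T: "T \<subseteq> U" "finite T" "U \<subseteq> (\<Union>u\<in>T. A u)"
    using compactE_image[OF \<open>compact U\<close>, of U A] AB by blast
  show thesis
  proof
    show "open (\<Inter>u\<in>T. B u)"
      using T AB by (intro open_INT) auto
    show "0 \<in> (\<Inter>u\<in>T. B u)"
      using T AB by auto
    fix u z assume "u \<in> U" "z \<in> (\<Inter>u\<in>T. B u)"
    then obtain t where "t \<in> T" "u \<in> A t" "z \<in> B t"
      using T by blast
    then have "(u, z) \<in> (\<lambda>p. fst p + snd p) -` U"
      using AB[of t] T(1) by blast
    then show "u + z \<in> U"
      by simp
  qed
qed

lemma multiple_in_open_subgroup_if_multiples_in_compact:
  fixes H K :: "'a::{ab_group_add, topological_space} set"
  assumes add: "continuous_on UNIV (\<lambda>p::'a \<times> 'a. fst p + snd p)"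
    and "open H" "subgroup_add H" "compact K" "\<And>n. nsmul n x \<in> K"
  obtains m where "m > 0" "nsmul m x \<in> H"
proof -
  have "K \<subseteq> (\<Union>t\<in>K. (\<lambda>y. y + - t) -` H)"
    using \<open>subgroup_add H\<close> by (auto simp: subgroup_add_def)
  then obtain T where T: "finite T" "K \<subseteq> (\<Union>t\<in>T. (\<lambda>y. y + - t) -` H)"
    using compactE_image[OF \<open>compact K\<close>, of K "\<lambda>t. (\<lambda>y. y + - t) -` H"]
      open_vimage_translation[OF add \<open>open H\<close>] by metis
  obtain f where f: "\<And>n. f n \<in> T \<and> nsmul n x - f n \<in> H"
  proof -
    have "\<forall>n. \<exists>t. t \<in> T \<and> nsmul n x - t \<in> H"
      using T(2) assms(5) by (fastforce simp: subset_eq)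
    then show thesis
      using that by metis
  qed
  have "\<not> inj f"
    using finite_subset[OF _ T(1), of "range f"] f finite_imageD by blast
  then obtain a b where "a < b" "f a = f b"
    unfolding inj_def by (metis linorder_neqE_nat)
  then have "nsmul b x - f b - (nsmul a x - f a) \<in> H"
    using f subgroup_add_diff[OF \<open>subgroup_add H\<close>] by blast
  moreover have "nsmul b x = nsmul (b - a) x + nsmul a x"
    using nsmul_add[of "b - a" a x] \<open>a < b\<close> by simp
  ultimately have "nsmul (b - a) x \<in> H"
    using \<open>f a = f b\<close> by (simp add: algebra_simps)
  then show thesis
    using \<open>a < b\<close> by (intro that[of "b - a"]) auto
qed

lemma pure_subgroup_root_closed:
  fixes H :: "'a::ab_group_add set"
  assumes "torsion_free TYPE('a)" "pure_subgroup H" "m > 0" "nsmul m x \<in> H"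
  shows "x \<in> H"
proof -
  have "nsmul m x \<in> H \<inter> range (nsmul m)"
    using assms(4) by blast
  then have "nsmul m x \<in> nsmul m ` H"
    using assms(2,3) unfolding pure_subgroup_def by blast
  then obtain h where "h \<in> H" "nsmul m x = nsmul m h"
    by blast
  then have "nsmul m (x - h) = 0"
    by (simp add: nsmul_diff)
  then have "x - h = 0"
    using assms(1,3) unfolding torsion_free_def by blast
  then show ?thesis
    using \<open>h \<in> H\<close> by simp
qed

lemma nsmul_mem_if_add_closed:
  assumes "0 \<in> U" "\<And>u. u \<in> U \<Longrightarrow> u + x \<in> U"
  shows "nsmul n x \<in> U"
proof (induction n)
  case (Suc n)
  have "nsmul n x + x \<in> U"
    using assms(2)[OF Suc] .
  then show ?case
    by (simp add: add.commute)
qed (simp add: assms(1))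

lemma mem_G_op_if_multiples_in_compact:
  fixes K :: "'a::{ab_group_add, topological_space} set"
  assumes add: "continuous_on UNIV (\<lambda>p::'a \<times> 'a. fst p + snd p)"
    and "torsion_free TYPE('a)" "compact K" "\<And>n. nsmul n x \<in> K"
  shows "x \<in> G_op"
proof -
  have "x \<in> H" if "open H" "pure_subgroup H" for H
  proof -
    obtain m where "m > 0" "nsmul m x \<in> H"
      using multiple_in_open_subgroup_if_multiples_in_compact[OF add \<open>open H\<close> _ assms(3,4)]
        \<open>pure_subgroup H\<close> by (auto simp: pure_subgroup_def)
    then show ?thesis
      using pure_subgroup_root_closed[OF assms(2) \<open>pure_subgroup H\<close>] by blast
  qed
  then show ?thesis
    unfolding G_op_def by blast
qed

theorem theorem13:
  assumes "LCA_group TYPE('a::{ab_group_add, t2_space})"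
    and "\<not> (\<forall>S::'a set. open S)"
    and "torsion_free TYPE('a)"
  shows "(G_op :: 'a set) \<noteq> {0}"
proof
  assume Gop: "(G_op :: 'a set) = {0}"
  have add: "continuous_on UNIV (\<lambda>p::'a \<times> 'a. fst p + snd p)"
    and lc: "locally_compact_space (euclidean :: 'a topology)"
    using assms(1) by (auto simp: LCA_group_def)
  have "\<exists>H. open H \<and> subgroup_add H \<and> y \<notin> H" if "y \<noteq> 0" for y :: 'a
  proof -
    have "y \<notin> (G_op :: 'a set)"
      using that by (subst Gop) simp
    then show ?thesis
      by (auto simp: G_op_def pure_subgroup_def)
  qed
  then obtain U :: "'a set" where U: "compact U" "open U" "0 \<in> U"
    by (rule compact_open_nhd_if_separated_by_open_subgroups[OF add lc])
  obtain N where N: "open N" "0 \<in> N" "\<And>u z. u \<in> U \<Longrightarrow> z \<in> N \<Longrightarrow> u + z \<in> U"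
    using compact_open_absorbs_nhd[OF add U(1,2)] by metis
  have "N \<noteq> {0}"
    using N(1) open_zero_imp_discrete[OF add] assms(2) by force
  then obtain x where "x \<in> N" "x \<noteq> 0"
    using N(2) by blast
  then have "x \<in> (G_op :: 'a set)"
    using mem_G_op_if_multiples_in_compact[OF add assms(3) U(1)]
      nsmul_mem_if_add_closed[OF U(3) N(3)] by blast
  then show False
    using \<open>x \<noteq> 0\<close> unfolding Gop by simp
qed

end
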